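(* Let $\mu$ be a probability distribution on $\mathcal X$, $\sigma\in(0,1]$, $\beta>0$, and let $K$ be a positive integer with $K\ge\log(T/\beta)/\sigma$. Let $A\subset\mathcal X^T$ be a measurable event such that $\Pr[\tilde X^T\in A]\ge1-\beta$ for every adversary $K$-selection process $\tilde X^T$ w.r.t. $\mu$. Then $\Pr[X^T\in A]\ge1-2\beta$ for every process $X^T$ that is $\sigma$-smooth w.r.t. $\mu$.
   Context: A distribution $\nu$ on $\mathcal X$ is $\sigma$-smooth w.r.t. $\mu$ ($\sigma\in(0,1]$) if $\nu$ is absolutely continuous w.r.t. $\mu$ and $\frac{d\nu}{d\mu}\le1/\sigma$ $\mu$-a.s. A process $X^T$ on $\mathcal X^T$ is $\sigma$-smooth w.r.t. $\mu$ if for all $t\le T$ the conditional distribution of $X_t$ given $X_1,\dots,X_{t-1}$ is $\sigma$-smooth w.r.t. $\mu$ almost surely. A random variable $X$ is $K$-selection w.r.t. $\mu$ if $X=f(V^K)\in\{V_1,\dots,V_K\}$ for some deterministic function $f$, where $V^K=(V_1,\dots,V_K)\sim\mu^{\otimes K}$. A process $\tilde X^T$ is an adversary $K$-selection process w.r.t. $\mu$ if for all $t\le T$ the conditional distribution of $\tilde X_t$ given $\tilde X_1,\dots,\tilde X_{t-1}$ is almost surely the law of some $K$-selection random variable w.r.t. $\mu$. *)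

theory Defs
  imports "HOL-Probability.Probability"
begin

definition sigma_smooth :: "'a measure \<Rightarrow> real \<Rightarrow> 'a measure \<Rightarrow> bool" where
  "sigma_smooth \<mu> \<sigma> \<nu> \<longleftrightarrow>
     sets \<nu> = sets \<mu> \<and> absolutely_continuous \<mu> \<nu> \<and>
     (AE x in \<mu>. RN_deriv \<mu> \<nu> x \<le> ennreal (1 / \<sigma>))"

definition K_selection_law :: "'a measure \<Rightarrow> nat \<Rightarrow> 'a measure \<Rightarrow> bool" where
  "K_selection_law \<mu> K \<nu> \<longleftrightarrow>
     (\<exists>f. f \<in> measurable (PiM {0..<K} (\<lambda>_. \<mu>)) \<mu> \<and>
          (\<forall>v\<in>space (PiM {0..<K} (\<lambda>_. \<mu>)). f v \<in> v ` {0..<K}) \<and>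
          \<nu> = distr (PiM {0..<K} (\<lambda>_. \<mu>)) \<mu> f)"

text \<open>Histories of length t: functions on {0..<t} (coordinates X_1..X_t are indexed 0..t-1).\<close>
abbreviation hist :: "'a measure \<Rightarrow> nat \<Rightarrow> (nat \<Rightarrow> 'a) measure" where
  "hist \<mu> t \<equiv> PiM {0..<t} (\<lambda>_. \<mu>)"

text \<open>A process is given by its conditional distributions: kappa t h is the conditional
  law of the (t+1)-st coordinate given the history h of the first t coordinates.
  proc_law mu kappa t is the joint law of the first t coordinates.\<close>
fun proc_law :: "'a measure \<Rightarrow> (nat \<Rightarrow> (nat \<Rightarrow> 'a) \<Rightarrow> 'a measure) \<Rightarrow> nat \<Rightarrow> (nat \<Rightarrow> 'a) measure" where
  "proc_law \<mu> \<kappa> 0 = hist \<mu> 0"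
| "proc_law \<mu> \<kappa> (Suc t) =
     bind (proc_law \<mu> \<kappa> t) (\<lambda>h. distr (\<kappa> t h) (hist \<mu> (Suc t)) (\<lambda>x. h(t := x)))"

definition kernel_process :: "'a measure \<Rightarrow> nat \<Rightarrow> (nat \<Rightarrow> (nat \<Rightarrow> 'a) \<Rightarrow> 'a measure) \<Rightarrow> bool" where
  "kernel_process \<mu> T \<kappa> \<longleftrightarrow> (\<forall>t<T. \<kappa> t \<in> measurable (hist \<mu> t) (prob_algebra \<mu>))"

definition smooth_process :: "'a measure \<Rightarrow> real \<Rightarrow> nat \<Rightarrow> (nat \<Rightarrow> (nat \<Rightarrow> 'a) \<Rightarrow> 'a measure) \<Rightarrow> bool" where
  "smooth_process \<mu> \<sigma> T \<kappa> \<longleftrightarrow> kernel_process \<mu> T \<kappa> \<and>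
     (\<forall>t<T. \<forall>h\<in>space (hist \<mu> t). sigma_smooth \<mu> \<sigma> (\<kappa> t h))"

definition adversary_selection_process :: "'a measure \<Rightarrow> nat \<Rightarrow> nat \<Rightarrow> (nat \<Rightarrow> (nat \<Rightarrow> 'a) \<Rightarrow> 'a measure) \<Rightarrow> bool" where
  "adversary_selection_process \<mu> K T \<kappa> \<longleftrightarrow> kernel_process \<mu> T \<kappa> \<and>
     (\<forall>t<T. \<forall>h\<in>space (hist \<mu> t). K_selection_law \<mu> K (\<kappa> t h))"

end

theory Submission
  imports Defs
begin

(* Let B be the complement of A. By backward induction, game_value t h is the largest probability
   of ending in B that a K-selection adversary can secure from a history h of length t, and the
   greedy adversary, which among K fresh samples from mu selects one of largest continuation
   value, attains it. A sigma-smooth distribution cannot do much better than this selection: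
   for measurable g \<le> 1, with S = E_nu g and a_k the expected maximum of g over k i.i.d. samples,
   the density bound sigma dnu/dmu \<le> 1 gives sigma S + a_k \<le> a_(k+1) + sigma a_k, hence
   S \<le> a_K + (1 - sigma)^K. So along a smooth process the expected game value grows by at most
   (1 - sigma)^K per round, and P[X in B] \<le> P[greedy in B] + T (1 - sigma)^K \<le> 2 beta because
   T (1 - sigma)^K \<le> T exp (- sigma K) \<le> beta. *)

fun max_prefix :: "('a \<Rightarrow> ennreal) \<Rightarrow> nat \<Rightarrow> (nat \<Rightarrow> 'a) \<Rightarrow> ennreal" where
  "max_prefix g 0 v = 0"
| "max_prefix g (Suc k) v = max (g (v k)) (max_prefix g k v)"

fun argmax_prefix :: "('a \<Rightarrow> ennreal) \<Rightarrow> nat \<Rightarrow> (nat \<Rightarrow> 'a) \<Rightarrow> nat" where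
  "argmax_prefix g 0 v = 0"
| "argmax_prefix g (Suc k) v = (if max_prefix g k v \<le> g (v k) then k else argmax_prefix g k v)"

lemma argmax_prefix_less: "0 < k \<Longrightarrow> argmax_prefix g k v < k"
  by (induction k) (auto simp: less_Suc_eq)

lemma max_prefix_at_argmax: "0 < k \<Longrightarrow> g (v (argmax_prefix g k v)) = max_prefix g k v"
proof (induction k)
  case (Suc k) then show ?case by (cases "k = 0") (auto simp: max_def)
qed simp

lemma max_prefix_fun_upd: "k \<le> j \<Longrightarrow> max_prefix g k (v(j := y)) = max_prefix g k v"
  by (induction k) auto

lemma max_prefix_le: "(\<And>x. g x \<le> c) \<Longrightarrow> max_prefix g k v \<le> c"
  by (induction k) auto

lemma measurable_max_prefix_param:
  assumes [measurable]: "case_prod G \<in> borel_measurable (N \<Otimes>\<^sub>M M)" and "k \<le> K"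
  shows "(\<lambda>(h, v). max_prefix (G h) k v) \<in> borel_measurable (N \<Otimes>\<^sub>M PiM {0..<K} (\<lambda>_. M))"
  using \<open>k \<le> K\<close>
proof (induction k)
  case (Suc k)
  then have [measurable]: "k \<in> {0..<K}" by simp
  have "(\<lambda>p. G (fst p) (snd p k)) \<in> borel_measurable (N \<Otimes>\<^sub>M PiM {0..<K} (\<lambda>_. M))"
    using measurable_comp[of "\<lambda>p. (fst p, snd p k)", OF _ assms(1)]
    by (simp add: comp_def split_beta)
  with Suc show ?case by (simp add: split_beta)
qed (simp add: case_prod_unfold)

lemma measurable_max_prefix:
  assumes "g \<in> borel_measurable M" and "k \<le> K"
  shows "max_prefix g k \<in> borel_measurable (PiM {0..<K} (\<lambda>_. M))"
  using measurable_Pair2[OF measurable_max_prefix_param[of "\<lambda>_::unit. g" "count_space UNIV" M k K]]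
    assms by (simp add: split_beta)

lemma measurable_argmax_prefix_param:
  assumes [measurable]: "case_prod G \<in> borel_measurable (N \<Otimes>\<^sub>M M)" and "k \<le> K"
  shows "(\<lambda>(h, v). argmax_prefix (G h) k v)
    \<in> measurable (N \<Otimes>\<^sub>M PiM {0..<K} (\<lambda>_. M)) (count_space UNIV)"
  using \<open>k \<le> K\<close>
proof (induction k)
  case (Suc k)
  then have [measurable]: "k \<in> {0..<K}" by simp
  have [measurable]: "(\<lambda>p. G (fst p) (snd p k)) \<in> borel_measurable (N \<Otimes>\<^sub>M PiM {0..<K} (\<lambda>_. M))"
    using measurable_comp[of "\<lambda>p. (fst p, snd p k)", OF _ assms(1)]
    by (simp add: comp_def split_beta)
  have [measurable]: "(\<lambda>p. max_prefix (G (fst p)) k (snd p)) \<in> borel_measurable (N \<Otimes>\<^sub>M PiM {0..<K} (\<lambda>_. M))"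
    using measurable_max_prefix_param[OF assms(1), of k K] Suc by (simp add: split_beta)
  have [measurable]: "(\<lambda>p. argmax_prefix (G (fst p)) k (snd p))
      \<in> measurable (N \<Otimes>\<^sub>M PiM {0..<K} (\<lambda>_. M)) (count_space UNIV)"
    using Suc by (simp add: split_beta)
  show ?case by (simp add: split_beta) measurable
qed (simp add: case_prod_unfold)

lemma measurable_select_argmax_prefix:
  assumes G: "case_prod G \<in> borel_measurable (N \<Otimes>\<^sub>M M)" and "0 < K"
  shows "(\<lambda>(h, v). v (argmax_prefix (G h) K v)) \<in> measurable (N \<Otimes>\<^sub>M PiM {0..<K} (\<lambda>_. M)) M"
proof -
  let ?i = "\<lambda>(h, v). argmax_prefix (G h) K v"
  \<comment> \<open>Clamping the index expresses the selection through countably many coordinate projections.\<close>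
  have "min (?i p) (K - 1) = ?i p" for p
    using argmax_prefix_less[OF \<open>0 < K\<close>, of "G (fst p)" "snd p"] by (simp add: split_beta)
  then have eq: "(\<lambda>(h, v). v (argmax_prefix (G h) K v)) = (\<lambda>p. snd p (min (?i p) (K - 1)))"
    by (auto simp: fun_eq_iff)
  have "(\<lambda>p. snd p (min i (K - 1))) \<in> measurable (N \<Otimes>\<^sub>M PiM {0..<K} (\<lambda>_. M)) M" for i
  proof -
    have "min i (K - 1) \<in> {0..<K}" using \<open>0 < K\<close> by auto
    then show ?thesis by measurable
  qed
  then show ?thesis
    unfolding eq using measurable_argmax_prefix_param[OF G order_refl]
    by (rule measurable_compose_countable)
qed

lemma measurable_fun_upd_hist: "(\<lambda>(h, x). h(t := x)) \<in> measurable (hist M t \<Otimes>\<^sub>M M) (hist M (Suc t))"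
  using measurable_add_dim[of t "{0..<t}" "\<lambda>_. M"] by (simp add: atLeast0_lessThan_Suc)

lemma ennreal_mult_add_le_max_add:
  fixes a b s :: ennreal
  assumes "s \<le> 1" "a < \<top>" "b < \<top>"
  shows "s * a + b \<le> max a b + s * b"
proof -
  obtain a' where a: "a = ennreal a'" "0 \<le> a'" using assms(2) by (cases a) auto
  obtain b' where b: "b = ennreal b'" "0 \<le> b'" using assms(3) by (cases b) auto
  obtain s' where s: "s = ennreal s'" "0 \<le> s'" "s' \<le> 1" using assms(1)
    by (cases s) (auto simp: ennreal_le_1 top_unique)
  have "s' * a' + b' \<le> max a' b' + s' * b'"
  proof (cases "a' \<le> b'")
    case True then show ?thesis using s by (simp add: max_def mult_left_mono)
  next
    case False
    then have "s' * (a' - b') \<le> a' - b'" using s by (simp add: mult_left_le_one_le)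
    then show ?thesis using False by (simp add: max_def algebra_simps)
  qed
  then show ?thesis using a b s
    by (simp add: ennreal_mult[symmetric] ennreal_plus[symmetric] max_def ennreal_le_iff del: ennreal_plus)
       (auto intro: mult_left_mono split: if_splits)
qed

lemma sigma_smooth_nn_integral_add_le:
  assumes "prob_space M" "prob_space \<nu>" "0 < \<sigma>" "sigma_smooth M \<sigma> \<nu>"
    and [measurable]: "g \<in> borel_measurable M" and g_le_1: "\<And>x. g x \<le> 1" and "m \<le> 1"
  shows "ennreal \<sigma> * (\<integral>\<^sup>+x. g x \<partial>\<nu>) + m \<le> (\<integral>\<^sup>+y. max (g y) m \<partial>M) + ennreal \<sigma> * m"
proof -
  interpret M: prob_space M by fact
  let ?\<rho> = "RN_deriv M \<nu>"
  have sets: "sets \<nu> = sets M" and ac: "absolutely_continuous M \<nu>"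
    and density_le: "AE y in M. ?\<rho> y \<le> ennreal (1 / \<sigma>)"
    using \<open>sigma_smooth M \<sigma> \<nu>\<close> unfolding sigma_smooth_def by auto
  have g_density: "(\<integral>\<^sup>+x. g x \<partial>\<nu>) = (\<integral>\<^sup>+y. ?\<rho> y * g y \<partial>M)"
    using M.RN_deriv_nn_integral[OF ac sets] by simp
  have density_1: "(\<integral>\<^sup>+y. ?\<rho> y \<partial>M) = 1"
    using M.RN_deriv_nn_integral[OF ac sets, of "\<lambda>_. 1"] prob_space.emeasure_space_1[OF \<open>prob_space \<nu>\<close>]
    by simp
  have finite: "g y < \<top>" "m < \<top>" for y
    using g_le_1[of y] \<open>m \<le> 1\<close> by (auto simp: le_less_trans[OF _ ennreal_one_less_top])
  have "ennreal \<sigma> * (\<integral>\<^sup>+x. g x \<partial>\<nu>) + m = (\<integral>\<^sup>+y. ennreal \<sigma> * ?\<rho> y * g y + m \<partial>M)"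
    by (simp add: g_density nn_integral_add nn_integral_cmult M.emeasure_space_1 mult.assoc)
  also have "\<dots> \<le> (\<integral>\<^sup>+y. max (g y) m + ennreal \<sigma> * ?\<rho> y * m \<partial>M)"
  proof (rule nn_integral_mono_AE)
    show "AE y in M. ennreal \<sigma> * ?\<rho> y * g y + m \<le> max (g y) m + ennreal \<sigma> * ?\<rho> y * m"
      using density_le
    proof eventually_elim
      case (elim y)
      have "ennreal \<sigma> * ?\<rho> y \<le> ennreal \<sigma> * ennreal (1 / \<sigma>)" by (rule mult_left_mono[OF elim]) simp
      also have "\<dots> = 1" using \<open>0 < \<sigma>\<close> by (simp add: ennreal_mult[symmetric])
      finally show ?case using ennreal_mult_add_le_max_add finite by blast
    qed
  qed
  also have "\<dots> = (\<integral>\<^sup>+y. max (g y) m \<partial>M) + ennreal \<sigma> * m"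
    by (simp add: nn_integral_add nn_integral_cmult density_1 mult.commute mult.left_commute)
  finally show ?thesis .
qed

lemma nn_integral_max_prefix_Suc:
  assumes "prob_space M" and [measurable]: "g \<in> borel_measurable M"
  shows "(\<integral>\<^sup>+v. max_prefix g (Suc K) v \<partial>hist M (Suc K))
    = (\<integral>\<^sup>+w. \<integral>\<^sup>+y. max (g y) (max_prefix g K w) \<partial>M \<partial>hist M K)"
proof -
  interpret product_sigma_finite "\<lambda>_. M"
    using \<open>prob_space M\<close> by (simp add: product_sigma_finite_def prob_space_imp_sigma_finite)
  have "(\<integral>\<^sup>+v. max_prefix g (Suc K) v \<partial>hist M (Suc K))
      = (\<integral>\<^sup>+w. \<integral>\<^sup>+y. max_prefix g (Suc K) (w(K := y)) \<partial>M \<partial>hist M K)"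
    using product_nn_integral_insert[of "{0..<K}" K "max_prefix g (Suc K)"]
      measurable_max_prefix[of g M "Suc K" "Suc K"]
    by (simp add: atLeast0_lessThan_Suc del: max_prefix.simps)
  then show ?thesis by (simp add: max_prefix_fun_upd)
qed

lemma sigma_smooth_max_prefix_step:
  assumes "prob_space M" "prob_space \<nu>" "0 < \<sigma>" "sigma_smooth M \<sigma> \<nu>"
    and [measurable]: "g \<in> borel_measurable M" and g_le_1: "\<And>x. g x \<le> 1"
  shows "ennreal \<sigma> * (\<integral>\<^sup>+x. g x \<partial>\<nu>) + (\<integral>\<^sup>+v. max_prefix g K v \<partial>hist M K)
    \<le> (\<integral>\<^sup>+v. max_prefix g (Suc K) v \<partial>hist M (Suc K)) + ennreal \<sigma> * (\<integral>\<^sup>+v. max_prefix g K v \<partial>hist M K)"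
proof -
  interpret M: prob_space M by fact
  interpret prob_space "hist M K" using \<open>prob_space M\<close> by (rule prob_space_PiM)
  have [measurable]: "max_prefix g K \<in> borel_measurable (hist M K)"
    by (rule measurable_max_prefix) simp_all
  have "ennreal \<sigma> * (\<integral>\<^sup>+x. g x \<partial>\<nu>) + (\<integral>\<^sup>+v. max_prefix g K v \<partial>hist M K)
      = (\<integral>\<^sup>+w. ennreal \<sigma> * (\<integral>\<^sup>+x. g x \<partial>\<nu>) + max_prefix g K w \<partial>hist M K)"
    by (simp add: nn_integral_add emeasure_space_1)
  also have "\<dots> \<le> (\<integral>\<^sup>+w. (\<integral>\<^sup>+y. max (g y) (max_prefix g K w) \<partial>M) + ennreal \<sigma> * max_prefix g K w \<partial>hist M K)"
    using assms max_prefix_le[of g 1, OF g_le_1] by (intro nn_integral_mono sigma_smooth_nn_integral_add_le)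
  also have "\<dots> = (\<integral>\<^sup>+v. max_prefix g (Suc K) v \<partial>hist M (Suc K)) + ennreal \<sigma> * (\<integral>\<^sup>+v. max_prefix g K v \<partial>hist M K)"
    unfolding nn_integral_max_prefix_Suc[OF \<open>prob_space M\<close> \<open>g \<in> borel_measurable M\<close>]
    by (subst nn_integral_add) (auto simp: nn_integral_cmult)
  finally show ?thesis .
qed

lemma geometric_gap_bound:
  fixes S \<sigma> :: real and a :: "nat \<Rightarrow> real"
  assumes "\<sigma> \<le> 1" "0 \<le> a 0" and step: "\<And>k. \<sigma> * S + a k \<le> a (Suc k) + \<sigma> * a k"
  shows "S \<le> a k + (1 - \<sigma>) ^ k * S"
proof (induction k)
  case (Suc k)
  have "(1 - \<sigma>) * S \<le> (1 - \<sigma>) * (a k + (1 - \<sigma>) ^ k * S)"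
    using Suc.IH \<open>\<sigma> \<le> 1\<close> by (intro mult_left_mono) simp_all
  then show ?case using step[of k] by (simp add: algebra_simps)
qed (simp add: \<open>0 \<le> a 0\<close>)

lemma sigma_smooth_nn_integral_le_max_prefix:
  assumes "prob_space M" "prob_space \<nu>" "0 < \<sigma>" "\<sigma> \<le> 1" "sigma_smooth M \<sigma> \<nu>"
    and [measurable]: "g \<in> borel_measurable M" and g_le_1: "\<And>x. g x \<le> 1"
  shows "(\<integral>\<^sup>+x. g x \<partial>\<nu>) \<le> (\<integral>\<^sup>+v. max_prefix g K v \<partial>hist M K) + ennreal ((1 - \<sigma>) ^ K)"
proof -
  interpret \<nu>: prob_space \<nu> by fact
  define S where "S = (\<integral>\<^sup>+x. g x \<partial>\<nu>)"
  define a where "a k = (\<integral>\<^sup>+v. max_prefix g k v \<partial>hist M k)" for k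
  have S_le_1: "S \<le> 1"
    unfolding S_def using nn_integral_mono[of \<nu> g "\<lambda>_. 1"] g_le_1 \<nu>.emeasure_space_1 by simp
  have a_le_1: "a k \<le> 1" for k
  proof -
    interpret prob_space "hist M k" using \<open>prob_space M\<close> by (rule prob_space_PiM)
    show ?thesis unfolding a_def
      using nn_integral_mono[of "hist M k" "max_prefix g k" "\<lambda>_. 1"] max_prefix_le[of g 1, OF g_le_1]
        emeasure_space_1 by simp
  qed
  have S_finite: "S < \<top>" and a_finite: "a k < \<top>" for k
    using S_le_1 a_le_1[of k] by (auto simp: le_less_trans[OF _ ennreal_one_less_top])
  have "\<sigma> * enn2real S + enn2real (a k) \<le> enn2real (a (Suc k)) + \<sigma> * enn2real (a k)" for k
  proof -
    have "ennreal \<sigma> * S + a k \<le> a (Suc k) + ennreal \<sigma> * a k"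
      unfolding S_def a_def using assms by (intro sigma_smooth_max_prefix_step) simp_all
    then have "enn2real (ennreal \<sigma> * S + a k) \<le> enn2real (a (Suc k) + ennreal \<sigma> * a k)"
      by (rule enn2real_mono) (simp add: a_finite ennreal_mult_less_top)
    then show ?thesis
      using \<open>0 < \<sigma>\<close> S_finite a_finite by (simp add: enn2real_plus enn2real_mult ennreal_mult_less_top)
  qed
  then have "enn2real S \<le> enn2real (a K) + (1 - \<sigma>) ^ K * enn2real S"
    using \<open>\<sigma> \<le> 1\<close> by (intro geometric_gap_bound) (simp_all add: a_def)
  also have "\<dots> \<le> enn2real (a K) + (1 - \<sigma>) ^ K"
    using S_le_1 S_finite \<open>0 < \<sigma>\<close> \<open>\<sigma> \<le> 1\<close> by (simp add: enn2real_leI mult_left_le)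
  finally have "ennreal (enn2real S) \<le> ennreal (enn2real (a K) + (1 - \<sigma>) ^ K)"
    by (rule ennreal_leI)
  moreover have "ennreal (enn2real (a K) + (1 - \<sigma>) ^ K) = a K + ennreal ((1 - \<sigma>) ^ K)"
    using a_finite[of K] \<open>\<sigma> \<le> 1\<close> by (subst ennreal_plus) simp_all
  ultimately show ?thesis
    using S_finite by (simp add: S_def a_def)
qed

lemma real_mult_power_one_minus_le:
  fixes \<sigma> \<beta> :: real and K T :: nat
  assumes "0 < \<sigma>" "\<sigma> \<le> 1" "0 < \<beta>" "real K \<ge> ln (real T / \<beta>) / \<sigma>"
  shows "real T * (1 - \<sigma>) ^ K \<le> \<beta>"
proof (cases "T = 0")
  case False
  have "(1 - \<sigma>) ^ K \<le> exp (- \<sigma>) ^ K"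
    using assms by (intro power_mono) (auto simp: exp_ge_add_one_self[of "-\<sigma>", simplified])
  also have "\<dots> = exp (- (\<sigma> * K))" by (simp add: exp_of_nat_mult[symmetric] mult.commute)
  also have "\<dots> \<le> exp (- ln (real T / \<beta>))"
    using assms by (simp add: divide_le_eq mult.commute)
  also have "\<dots> = \<beta> / real T" using False assms by (simp add: exp_minus)
  finally show ?thesis using False by (simp add: field_simps)
qed (use assms in simp)

lemma kernel_process_kernelD:
  assumes "kernel_process M T \<kappa>" "t < T" "h \<in> space (hist M t)"
  shows "prob_space (\<kappa> t h)" "sets (\<kappa> t h) = sets M"
  using measurable_space[of "\<kappa> t" "hist M t" "prob_algebra M" h] assms
  by (auto simp: kernel_process_def space_prob_algebra)

lemma proc_law_in_prob_algebra:
  assumes "prob_space M" "kernel_process M T \<kappa>" "t \<le> T"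
  shows "proc_law M \<kappa> t \<in> space (prob_algebra (hist M t))"
  using \<open>t \<le> T\<close>
proof (induction t)
  case 0
  then show ?case using prob_space_PiM[of "{}" "\<lambda>_. M"] \<open>prob_space M\<close> by (simp add: space_prob_algebra)
next
  case (Suc t)
  have "\<kappa> t \<in> hist M t \<rightarrow>\<^sub>M prob_algebra M"
    using assms(2) Suc.prems unfolding kernel_process_def by auto
  then have kernel: "(\<lambda>h. distr (\<kappa> t h) (hist M (Suc t)) (\<lambda>x. h(t := x)))
      \<in> hist M t \<rightarrow>\<^sub>M prob_algebra (hist M (Suc t))"
    by (rule measurable_distr_prob_space2[OF _ measurable_fun_upd_hist])
  have "proc_law M \<kappa> t \<in> space (prob_algebra (hist M t))" using Suc by simp
  then show ?case
    using prob_space_bind'[OF _ kernel] sets_bind'[OF _ kernel] by (simp add: space_prob_algebra)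
qed

lemma
  assumes "prob_space M" "kernel_process M T \<kappa>" "t \<le> T"
  shows prob_space_proc_law: "prob_space (proc_law M \<kappa> t)"
    and sets_proc_law: "sets (proc_law M \<kappa> t) = sets (hist M t)"
    and space_proc_law: "space (proc_law M \<kappa> t) = space (hist M t)"
  using proc_law_in_prob_algebra[OF assms] sets_eq_imp_space_eq by (auto simp: space_prob_algebra)

lemma nn_integral_proc_law_Suc:
  assumes "prob_space M" "kernel_process M T \<kappa>" "t < T"
    and f: "f \<in> borel_measurable (hist M (Suc t))"
  shows "(\<integral>\<^sup>+y. f y \<partial>proc_law M \<kappa> (Suc t)) = (\<integral>\<^sup>+h. \<integral>\<^sup>+x. f (h(t := x)) \<partial>\<kappa> t h \<partial>proc_law M \<kappa> t)"
proof -
  have sets: "sets (proc_law M \<kappa> t) = sets (hist M t)"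
    using sets_proc_law[OF assms(1,2)] \<open>t < T\<close> by simp
  have "\<kappa> t \<in> hist M t \<rightarrow>\<^sub>M prob_algebra M"
    using assms(2,3) unfolding kernel_process_def by auto
  then have kernel: "(\<lambda>h. distr (\<kappa> t h) (hist M (Suc t)) (\<lambda>x. h(t := x)))
      \<in> proc_law M \<kappa> t \<rightarrow>\<^sub>M subprob_algebra (hist M (Suc t))"
    using measurable_prob_algebraD[OF measurable_distr_prob_space2[OF _ measurable_fun_upd_hist]]
    by (simp add: measurable_cong_sets[OF sets refl])
  have "(\<integral>\<^sup>+y. f y \<partial>proc_law M \<kappa> (Suc t))
      = (\<integral>\<^sup>+h. \<integral>\<^sup>+y. f y \<partial>distr (\<kappa> t h) (hist M (Suc t)) (\<lambda>x. h(t := x)) \<partial>proc_law M \<kappa> t)"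
    by (simp add: nn_integral_bind[OF f kernel])
  also have "\<dots> = (\<integral>\<^sup>+h. \<integral>\<^sup>+x. f (h(t := x)) \<partial>\<kappa> t h \<partial>proc_law M \<kappa> t)"
  proof (rule nn_integral_cong)
    fix h assume "h \<in> space (proc_law M \<kappa> t)"
    then have h: "h \<in> space (hist M t)" using sets_eq_imp_space_eq[OF sets] by simp
    have "(\<lambda>x. h(t := x)) \<in> measurable M (hist M (Suc t))"
      using measurable_Pair2[OF measurable_fun_upd_hist h] by simp
    then have "(\<lambda>x. h(t := x)) \<in> measurable (\<kappa> t h) (hist M (Suc t))"
      by (simp add: measurable_cong_sets[OF kernel_process_kernelD(2)[OF assms(2,3) h] refl])
    with f show "(\<integral>\<^sup>+y. f y \<partial>distr (\<kappa> t h) (hist M (Suc t)) (\<lambda>x. h(t := x))) = (\<integral>\<^sup>+x. f (h(t := x)) \<partial>\<kappa> t h)"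
      by (subst nn_integral_distr) auto
  qed
  finally show ?thesis .
qed

lemma measure_proc_law_compl:
  assumes "prob_space M" "kernel_process M T \<kappa>" "A \<in> sets (hist M T)"
  shows "measure (proc_law M \<kappa> T) (space (hist M T) - A) = 1 - measure (proc_law M \<kappa> T) A"
proof -
  interpret prob_space "proc_law M \<kappa> T" by (rule prob_space_proc_law[OF assms(1,2) order_refl])
  have "A \<in> events" using sets_proc_law[OF assms(1,2) order_refl] assms(3) by simp
  then show ?thesis using prob_compl space_proc_law[OF assms(1,2) order_refl] by simp
qed

locale selection_game = prob_space \<mu> for \<mu> :: "'a measure" +
  fixes K T :: nat and B :: "(nat \<Rightarrow> 'a) set"
  assumes K_pos: "0 < K" and B_sets: "B \<in> sets (hist \<mu> T)"
begin

text \<open>Indexed by the number of remaining rounds, so that the backward recursion is structural.\<close>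
fun remaining_value :: "nat \<Rightarrow> (nat \<Rightarrow> 'a) \<Rightarrow> ennreal" where
  "remaining_value 0 h = indicator B h"
| "remaining_value (Suc n) h =
     (\<integral>\<^sup>+v. max_prefix (\<lambda>x. remaining_value n (h(T - Suc n := x))) K v \<partial>hist \<mu> K)"

definition game_value :: "nat \<Rightarrow> (nat \<Rightarrow> 'a) \<Rightarrow> ennreal" where
  "game_value t = remaining_value (T - t)"

lemma game_value_final: "game_value T = indicator B"
  by (simp add: game_value_def fun_eq_iff)

lemma game_value_Suc:
  "t < T \<Longrightarrow> game_value t h = (\<integral>\<^sup>+v. max_prefix (\<lambda>x. game_value (Suc t) (h(t := x))) K v \<partial>hist \<mu> K)"
  using remaining_value.simps(2)[of "T - Suc t" h] by (simp add: game_value_def Suc_diff_Suc)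

lemma game_value_le_1: "game_value t h \<le> 1"
proof -
  interpret K: prob_space "hist \<mu> K" by (rule prob_space_PiM) (rule prob_space_axioms)
  have "remaining_value n h \<le> 1" for n
  proof (induction n arbitrary: h)
    case (Suc n)
    let ?g = "\<lambda>x. remaining_value n (h(T - Suc n := x))"
    show ?case
      using nn_integral_mono[of "hist \<mu> K" "max_prefix ?g K" "\<lambda>_. 1"] max_prefix_le[of ?g 1]
        Suc K.emeasure_space_1 by simp
  qed (simp add: indicator_def)
  then show ?thesis by (simp add: game_value_def)
qed

lemma measurable_game_value:
  assumes "t \<le> T" shows "game_value t \<in> borel_measurable (hist \<mu> t)"
proof -
  interpret K: prob_space "hist \<mu> K" by (rule prob_space_PiM) (rule prob_space_axioms)
  have "remaining_value n \<in> borel_measurable (hist \<mu> (T - n))" if "n \<le> T" for n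
    using that
  proof (induction n)
    case 0
    have "remaining_value 0 = indicator B" by (rule ext) simp
    with B_sets show ?case by simp
  next
    case (Suc n)
    define t where "t = T - Suc n"
    have "T - n = Suc t" using Suc.prems unfolding t_def by simp
    with Suc have "remaining_value n \<in> borel_measurable (hist \<mu> (Suc t))" by simp
    from measurable_comp[OF measurable_fun_upd_hist this]
    have "(\<lambda>(h, x). remaining_value n (h(t := x))) \<in> borel_measurable (hist \<mu> t \<Otimes>\<^sub>M \<mu>)"
      by (simp add: comp_def split_beta')
    from measurable_max_prefix_param[OF this, of K K]
    have "(\<lambda>h. \<integral>\<^sup>+v. max_prefix (\<lambda>x. remaining_value n (h(t := x))) K v \<partial>hist \<mu> K)
        \<in> borel_measurable (hist \<mu> t)"
      by (intro K.borel_measurable_nn_integral) simp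
    then show ?case unfolding t_def by simp
  qed
  from this[of "T - t"] show ?thesis using \<open>t \<le> T\<close> by (simp add: game_value_def)
qed

lemma measurable_game_value_upd:
  assumes "t < T"
  shows "(\<lambda>(h, x). game_value (Suc t) (h(t := x))) \<in> borel_measurable (hist \<mu> t \<Otimes>\<^sub>M \<mu>)"
  using measurable_comp[OF measurable_fun_upd_hist measurable_game_value[of "Suc t"]] assms
  by (simp add: comp_def split_beta')

definition greedy_kernel :: "nat \<Rightarrow> (nat \<Rightarrow> 'a) \<Rightarrow> 'a measure" where
  "greedy_kernel t h =
     distr (hist \<mu> K) \<mu> (\<lambda>v. v (argmax_prefix (\<lambda>x. game_value (Suc t) (h(t := x))) K v))"

lemma measurable_greedy_selection_pair:
  assumes "t < T"
  shows "(\<lambda>(h, v). v (argmax_prefix (\<lambda>x. game_value (Suc t) (h(t := x))) K v))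
    \<in> hist \<mu> t \<Otimes>\<^sub>M hist \<mu> K \<rightarrow>\<^sub>M \<mu>"
  using measurable_select_argmax_prefix[of "\<lambda>h x. game_value (Suc t) (h(t := x))" "hist \<mu> t" \<mu> K]
    measurable_game_value_upd[OF assms] K_pos by simp

lemma measurable_greedy_selection:
  assumes "t < T" "h \<in> space (hist \<mu> t)"
  shows "(\<lambda>v. v (argmax_prefix (\<lambda>x. game_value (Suc t) (h(t := x))) K v)) \<in> hist \<mu> K \<rightarrow>\<^sub>M \<mu>"
  using measurable_Pair2[OF measurable_greedy_selection_pair assms(2)] assms(1) by simp

lemma adversary_selection_process_greedy: "adversary_selection_process \<mu> K T greedy_kernel"
  unfolding adversary_selection_process_def kernel_process_def
proof (intro conjI allI impI ballI)
  fix t assume "t < T"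
  have "hist \<mu> K \<in> space (prob_algebra (hist \<mu> K))"
    using prob_space_PiM[OF prob_space_axioms] by (simp add: space_prob_algebra)
  then show "greedy_kernel t \<in> hist \<mu> t \<rightarrow>\<^sub>M prob_algebra \<mu>"
    unfolding greedy_kernel_def
    by (rule measurable_distr_prob_space2[OF measurable_const measurable_greedy_selection_pair[OF \<open>t < T\<close>]])
next
  fix t h assume "t < T" "h \<in> space (hist \<mu> t)"
  let ?select = "\<lambda>v. v (argmax_prefix (\<lambda>x. game_value (Suc t) (h(t := x))) K v)"
  have "\<forall>v\<in>space (hist \<mu> K). ?select v \<in> v ` {0..<K}"
    by (intro ballI image_eqI[OF refl]) (simp add: argmax_prefix_less[OF K_pos])
  then show "K_selection_law \<mu> K (greedy_kernel t h)"
    unfolding K_selection_law_def greedy_kernel_def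
    using measurable_greedy_selection[OF \<open>t < T\<close> \<open>h \<in> space (hist \<mu> t)\<close>]
    by (intro exI[of _ ?select]) simp
qed

lemma kernel_process_greedy: "kernel_process \<mu> T greedy_kernel"
  using adversary_selection_process_greedy by (simp add: adversary_selection_process_def)

lemma nn_integral_greedy_kernel:
  assumes "t < T" "h \<in> space (hist \<mu> t)"
  shows "(\<integral>\<^sup>+x. game_value (Suc t) (h(t := x)) \<partial>greedy_kernel t h) = game_value t h"
proof -
  have "(\<lambda>x. game_value (Suc t) (h(t := x))) \<in> borel_measurable \<mu>"
    using measurable_Pair2[OF measurable_game_value_upd assms(2)] assms(1) by simp
  then show ?thesis
    unfolding greedy_kernel_def using assms K_pos
    by (simp add: nn_integral_distr[OF measurable_greedy_selection] game_value_Suc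
        max_prefix_at_argmax[OF K_pos, of "\<lambda>x. game_value (Suc t) (h(t := x))"])
qed

lemma nn_integral_sigma_smooth_game_value_le:
  assumes "t < T" "h \<in> space (hist \<mu> t)" "prob_space \<nu>" "0 < \<sigma>" "\<sigma> \<le> 1" "sigma_smooth \<mu> \<sigma> \<nu>"
  shows "(\<integral>\<^sup>+x. game_value (Suc t) (h(t := x)) \<partial>\<nu>) \<le> game_value t h + ennreal ((1 - \<sigma>) ^ K)"
proof -
  have "(\<lambda>x. game_value (Suc t) (h(t := x))) \<in> borel_measurable \<mu>"
    using measurable_Pair2[OF measurable_game_value_upd assms(2)] assms(1) by simp
  then show ?thesis
    using sigma_smooth_nn_integral_le_max_prefix[OF prob_space_axioms assms(3-6)] game_value_le_1
    by (simp add: game_value_Suc[OF \<open>t < T\<close>])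
qed

lemma nn_integral_game_value_greedy:
  assumes "t \<le> T"
  shows "(\<integral>\<^sup>+h. game_value t h \<partial>proc_law \<mu> greedy_kernel t) = (\<integral>\<^sup>+h. game_value 0 h \<partial>hist \<mu> 0)"
  using assms
proof (induction t)
  case (Suc t)
  have "(\<integral>\<^sup>+h. game_value (Suc t) h \<partial>proc_law \<mu> greedy_kernel (Suc t))
      = (\<integral>\<^sup>+h. \<integral>\<^sup>+x. game_value (Suc t) (h(t := x)) \<partial>greedy_kernel t h \<partial>proc_law \<mu> greedy_kernel t)"
    using Suc.prems by (intro nn_integral_proc_law_Suc[OF prob_space_axioms kernel_process_greedy] measurable_game_value) simp_all
  also have "\<dots> = (\<integral>\<^sup>+h. game_value t h \<partial>proc_law \<mu> greedy_kernel t)"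
    using Suc.prems by (intro nn_integral_cong nn_integral_greedy_kernel)
      (simp_all add: space_proc_law[OF prob_space_axioms kernel_process_greedy])
  finally show ?case using Suc by simp
qed simp

lemma nn_integral_game_value_smooth_le:
  assumes "smooth_process \<mu> \<sigma> T \<kappa>" "0 < \<sigma>" "\<sigma> \<le> 1" "t \<le> T"
  shows "(\<integral>\<^sup>+h. game_value t h \<partial>proc_law \<mu> \<kappa> t)
    \<le> (\<integral>\<^sup>+h. game_value 0 h \<partial>hist \<mu> 0) + of_nat t * ennreal ((1 - \<sigma>) ^ K)"
  using \<open>t \<le> T\<close>
proof (induction t)
  case (Suc t)
  let ?\<epsilon> = "ennreal ((1 - \<sigma>) ^ K)"
  have kernel: "kernel_process \<mu> T \<kappa>" using assms(1) by (simp add: smooth_process_def)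
  have t: "t < T" "t \<le> T" using Suc.prems by simp_all
  interpret P: prob_space "proc_law \<mu> \<kappa> t" using prob_space_proc_law[OF prob_space_axioms kernel t(2)] .
  have sets: "sets (proc_law \<mu> \<kappa> t) = sets (hist \<mu> t)" by (rule sets_proc_law[OF prob_space_axioms kernel t(2)])
  have "(\<integral>\<^sup>+h. game_value (Suc t) h \<partial>proc_law \<mu> \<kappa> (Suc t))
      = (\<integral>\<^sup>+h. \<integral>\<^sup>+x. game_value (Suc t) (h(t := x)) \<partial>\<kappa> t h \<partial>proc_law \<mu> \<kappa> t)"
    using t Suc.prems by (intro nn_integral_proc_law_Suc[OF prob_space_axioms kernel] measurable_game_value)
  also have "\<dots> \<le> (\<integral>\<^sup>+h. game_value t h + ?\<epsilon> \<partial>proc_law \<mu> \<kappa> t)"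
  proof (rule nn_integral_mono)
    fix h assume "h \<in> space (proc_law \<mu> \<kappa> t)"
    then have h: "h \<in> space (hist \<mu> t)" using sets_eq_imp_space_eq[OF sets] by simp
    have "prob_space (\<kappa> t h)" using kernel_process_kernelD(1)[OF kernel t(1) h] .
    moreover have "sigma_smooth \<mu> \<sigma> (\<kappa> t h)" using assms(1) h t(1) by (simp add: smooth_process_def)
    ultimately show "(\<integral>\<^sup>+x. game_value (Suc t) (h(t := x)) \<partial>\<kappa> t h) \<le> game_value t h + ?\<epsilon>"
      using nn_integral_sigma_smooth_game_value_le[OF t(1) h _ assms(2,3)] by blast
  qed
  also have "\<dots> = (\<integral>\<^sup>+h. game_value t h \<partial>proc_law \<mu> \<kappa> t) + ?\<epsilon>"
  proof -
    have "game_value t \<in> borel_measurable (proc_law \<mu> \<kappa> t)"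
      using measurable_game_value[OF t(2)] by (simp only: measurable_cong_sets[OF sets refl])
    then show ?thesis by (subst nn_integral_add) (simp_all add: P.emeasure_space_1)
  qed
  also have "\<dots> \<le> (\<integral>\<^sup>+h. game_value 0 h \<partial>hist \<mu> 0) + of_nat t * ?\<epsilon> + ?\<epsilon>"
    using Suc.IH[OF t(2)] by (rule add_right_mono)
  also have "\<dots> = (\<integral>\<^sup>+h. game_value 0 h \<partial>hist \<mu> 0) + of_nat (Suc t) * ?\<epsilon>"
    by (simp add: distrib_right add.assoc)
  finally show ?case .
qed simp

lemma emeasure_smooth_le_greedy:
  assumes "smooth_process \<mu> \<sigma> T \<kappa>" "0 < \<sigma>" "\<sigma> \<le> 1"
  shows "emeasure (proc_law \<mu> \<kappa> T) B
    \<le> emeasure (proc_law \<mu> greedy_kernel T) B + of_nat T * ennreal ((1 - \<sigma>) ^ K)"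
proof -
  have kernel: "kernel_process \<mu> T \<kappa>" using assms(1) by (simp add: smooth_process_def)
  have "emeasure (proc_law \<mu> \<kappa> T) B = (\<integral>\<^sup>+h. game_value T h \<partial>proc_law \<mu> \<kappa> T)"
    using B_sets sets_proc_law[OF prob_space_axioms kernel order_refl] by (simp add: game_value_final)
  also have "\<dots> \<le> (\<integral>\<^sup>+h. game_value T h \<partial>proc_law \<mu> greedy_kernel T) + of_nat T * ennreal ((1 - \<sigma>) ^ K)"
    using nn_integral_game_value_smooth_le[OF assms order_refl] nn_integral_game_value_greedy[OF order_refl]
    by simp
  also have "(\<integral>\<^sup>+h. game_value T h \<partial>proc_law \<mu> greedy_kernel T) = emeasure (proc_law \<mu> greedy_kernel T) B"
    using B_sets sets_proc_law[OF prob_space_axioms kernel_process_greedy order_refl]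
    by (simp add: game_value_final)
  finally show ?thesis .
qed

lemma measure_smooth_le_greedy:
  assumes "smooth_process \<mu> \<sigma> T \<kappa>" "0 < \<sigma>" "\<sigma> \<le> 1"
  shows "measure (proc_law \<mu> \<kappa> T) B \<le> measure (proc_law \<mu> greedy_kernel T) B + real T * (1 - \<sigma>) ^ K"
proof -
  have "kernel_process \<mu> T \<kappa>" using assms(1) by (simp add: smooth_process_def)
  interpret P: prob_space "proc_law \<mu> \<kappa> T"
    by (rule prob_space_proc_law[OF prob_space_axioms \<open>kernel_process \<mu> T \<kappa>\<close> order_refl])
  interpret G: prob_space "proc_law \<mu> greedy_kernel T"
    by (rule prob_space_proc_law[OF prob_space_axioms kernel_process_greedy order_refl])
  have "ennreal (measure (proc_law \<mu> \<kappa> T) B)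
      \<le> ennreal (measure (proc_law \<mu> greedy_kernel T) B + real T * (1 - \<sigma>) ^ K)"
    using emeasure_smooth_le_greedy[OF assms] assms(3)
    by (simp add: P.emeasure_eq_measure G.emeasure_eq_measure ennreal_of_nat_eq_real_of_nat
        ennreal_mult[symmetric] ennreal_plus[symmetric] del: ennreal_plus)
  then show ?thesis using assms(3) by (subst (asm) ennreal_le_iff) simp_all
qed

end

theorem lemma16:
  fixes \<mu> :: "'a measure" and \<sigma> \<beta> :: real and K T :: nat and A :: "(nat \<Rightarrow> 'a) set"
  assumes "prob_space \<mu>"
    and "0 < \<sigma>" and "\<sigma> \<le> 1" and "0 < \<beta>"
    and "0 < K" and "real K \<ge> ln (real T / \<beta>) / \<sigma>"
    and "A \<in> sets (hist \<mu> T)"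
    and "\<forall>\<kappa>. adversary_selection_process \<mu> K T \<kappa> \<longrightarrow> measure (proc_law \<mu> \<kappa> T) A \<ge> 1 - \<beta>"
  shows "\<forall>\<kappa>. smooth_process \<mu> \<sigma> T \<kappa> \<longrightarrow> measure (proc_law \<mu> \<kappa> T) A \<ge> 1 - 2 * \<beta>"
proof (intro allI impI)
  fix \<kappa> assume smooth: "smooth_process \<mu> \<sigma> T \<kappa>"
  then have kernel: "kernel_process \<mu> T \<kappa>" by (simp add: smooth_process_def)
  define B where "B = space (hist \<mu> T) - A"
  have "B \<in> sets (hist \<mu> T)" unfolding B_def using assms(7) by (rule sets.compl_sets)
  interpret selection_game \<mu> K T B
    using assms(1,5) \<open>B \<in> sets (hist \<mu> T)\<close> by (intro selection_game.intro selection_game_axioms.intro)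
  have "measure (proc_law \<mu> greedy_kernel T) A \<ge> 1 - \<beta>"
    using assms(8) adversary_selection_process_greedy by blast
  moreover have "real T * (1 - \<sigma>) ^ K \<le> \<beta>"
    using real_mult_power_one_minus_le assms(2,3,4,6) .
  ultimately show "measure (proc_law \<mu> \<kappa> T) A \<ge> 1 - 2 * \<beta>"
    using measure_smooth_le_greedy[OF smooth assms(2,3)]
      measure_proc_law_compl[OF assms(1) kernel assms(7), folded B_def]
      measure_proc_law_compl[OF assms(1) kernel_process_greedy assms(7), folded B_def] by linarith
qed

end
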